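(* Let $X,Y,Z$ be complex Banach spaces, $\emptyset\ne I\subseteq\mathbb R^n$, let $\mathcal B$ be a non-empty collection of non-empty subsets of $X$ such that every $x\in X$ belongs to some $B\in\mathcal B$, and let $\mathrm R$ be a non-empty collection of sequences in $\mathbb R^n$ such that $\mathbf t+\mathbf b(l)\in I$ whenever $\mathbf t\in I$, $\mathbf b\in\mathrm R$, $l\in\mathbb N$. Suppose $F:I\times X\to Y$ is $(\mathrm R,\mathcal B)$-multi-almost periodic and $G:I\times Y\to Z$ is $(\mathrm R',\mathcal B')$-multi-almost periodic, where $\mathrm R'$ consists of all sequences from $\mathrm R$ together with all their subsequences and $\mathcal B':=\{\bigcup_{\mathbf t\in I}F(\mathbf t;B):B\in\mathcal B\}$. If there exists $L>0$ with $\|G(\mathbf t;x)-G(\mathbf t;y)\|_Z\le L\|x-y\|_Y$ for all $\mathbf t\in I$, $x,y\in Y$, then $W(\mathbf t;x):=G(\mathbf t;F(\mathbf t;x))$, $\mathbf t\in I$, $x\in X$, is $(\mathrm R,\mathcal B)$-multi-almost periodic.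
   Context: For Banach spaces $U,V$, a collection $\mathcal C$ of subsets of $U$ and a collection $\mathrm S$ of sequences in $\mathbb R^n$ with $\mathbf t+\mathbf b(l)\in I$ for $\mathbf t\in I$, $\mathbf b\in\mathrm S$, a continuous $H:I\times U\to V$ is $(\mathrm S,\mathcal C)$-multi-almost periodic if for every $C\in\mathcal C$ and every $(\mathbf b_k)\in\mathrm S$ there exist a subsequence $(\mathbf b_{k_l})$ and $H^\ast:I\times U\to V$ with $H(\mathbf t+\mathbf b_{k_l};u)\to H^\ast(\mathbf t;u)$ uniformly for $u\in C$, $\mathbf t\in I$. *)

theory Defs
  imports "HOL-Analysis.Analysis"
begin

class complex_normed_vector = real_normed_vector +
  fixes scaleC :: "complex \<Rightarrow> 'a \<Rightarrow> 'a"
  assumes scaleC_add_right: "scaleC a (x + y) = scaleC a x + scaleC a y"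
    and scaleC_add_left: "scaleC (a + b) x = scaleC a x + scaleC b x"
    and scaleC_scaleC: "scaleC a (scaleC b x) = scaleC (a * b) x"
    and scaleC_one: "scaleC 1 x = x"
    and scaleC_of_real: "scaleC (of_real r) x = scaleR r x"
    and norm_scaleC: "norm (scaleC a x) = cmod a * norm x"

definition multi_almost_periodic ::
  "(real^('n::finite)) set \<Rightarrow> (nat \<Rightarrow> real^'n) set \<Rightarrow> 'u set set
     \<Rightarrow> (real^'n \<Rightarrow> 'u::real_normed_vector \<Rightarrow> 'v::real_normed_vector) \<Rightarrow> bool"
  where "multi_almost_periodic I S C H \<longleftrightarrow>
    continuous_on (I \<times> UNIV) (\<lambda>(t, u). H t u) \<and>
    (\<forall>B\<in>C. \<forall>b\<in>S. \<exists>k::nat \<Rightarrow> nat. strict_mono k \<and>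
       (\<exists>Hs :: real^'n \<Rightarrow> 'u \<Rightarrow> 'v.
          uniform_limit (I \<times> B) (\<lambda>l (t, u). H (t + b (k l)) u) (\<lambda>(t, u). Hs t u) sequentially))"

end

theory Submission
  imports Defs
begin

lemma ex_uniform_limit_case_prod:
  "(\<exists>h. uniform_limit X f (\<lambda>(t, u). h t u) F) \<longleftrightarrow> (\<exists>h. uniform_limit X f h F)"
  by (metis case_prod_curry)

lemma multi_almost_periodic_iff:
  "multi_almost_periodic I S C H \<longleftrightarrow>
     continuous_on (I \<times> UNIV) (\<lambda>(t, u). H t u) \<and>
     (\<forall>B\<in>C. \<forall>b\<in>S. \<exists>k. strict_mono k \<and>
        uniformly_convergent_on (I \<times> B) (\<lambda>l (t, u). H (t + b (k l)) u))"
  unfolding multi_almost_periodic_def uniformly_convergent_on_def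
  by (simp only: ex_uniform_limit_case_prod)

lemma continuous_on_parametric_comp:
  assumes "continuous_on (I \<times> UNIV) (\<lambda>(t, u). F t u)"
    and "continuous_on (I \<times> UNIV) (\<lambda>(t, y). G t y)"
  shows "continuous_on (I \<times> UNIV) (\<lambda>(t, x). G t (F t x))"
proof -
  have "continuous_on (I \<times> UNIV) (\<lambda>p. (fst p, (\<lambda>(t, u). F t u) p))"
    by (intro continuous_intros assms(1))
  then have "continuous_on (I \<times> UNIV) ((\<lambda>(t, y). G t y) \<circ> (\<lambda>p. (fst p, (\<lambda>(t, u). F t u) p)))"
    by (rule continuous_on_compose[OF _ continuous_on_subset[OF assms(2)]]) auto
  then show ?thesis
    by (simp add: o_def case_prod_beta)
qed

lemma uniformly_Cauchy_on_lipschitz_comp: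
  fixes f :: "nat \<Rightarrow> 'a \<Rightarrow> 'b::metric_space" and g :: "nat \<Rightarrow> 'p \<Rightarrow> 'b \<Rightarrow> 'c::metric_space"
  assumes f: "uniformly_Cauchy_on S f"
    and g: "uniformly_Cauchy_on T (\<lambda>n (p, y). g n p y)"
    and maps_to: "\<And>n x. x \<in> S \<Longrightarrow> (\<pi> x, f n x) \<in> T"
    and lipschitz: "\<And>n x. x \<in> S \<Longrightarrow> L-lipschitz_on UNIV (g n (\<pi> x))"
  shows "uniformly_Cauchy_on S (\<lambda>n x. g n (\<pi> x) (f n x))"
proof (rule uniformly_Cauchy_onI)
  fix e :: real
  assume "e > 0"
  define L' where "L' = max L 0 + 1"
  have L': "L' > 0" "\<And>n x. x \<in> S \<Longrightarrow> L'-lipschitz_on UNIV (g n (\<pi> x))"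
    using lipschitz by (auto simp: L'_def intro: lipschitz_on_le[of L])
  obtain M1 where M1: "\<And>x m n. x \<in> S \<Longrightarrow> m \<ge> M1 \<Longrightarrow> n \<ge> M1 \<Longrightarrow> dist (f m x) (f n x) < e / (2 * L')"
    using f \<open>e > 0\<close> \<open>L' > 0\<close> unfolding uniformly_Cauchy_on_def
    by (metis divide_pos_pos mult_pos_pos zero_less_numeral)
  obtain M2 where M2: "\<And>p y m n. (p, y) \<in> T \<Longrightarrow> m \<ge> M2 \<Longrightarrow> n \<ge> M2 \<Longrightarrow> dist (g m p y) (g n p y) < e / 2"
    using g \<open>e > 0\<close> unfolding uniformly_Cauchy_on_def by (fastforce dest: spec[of _ "e / 2"])
  have "dist (g m (\<pi> x) (f m x)) (g n (\<pi> x) (f n x)) < e"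
    if x: "x \<in> S" and m: "m \<ge> max M1 M2" and n: "n \<ge> max M1 M2" for x m n
  proof -
    have "dist (g m (\<pi> x) (f m x)) (g m (\<pi> x) (f n x)) \<le> L' * dist (f m x) (f n x)"
      using L'(2)[OF x] by (rule lipschitz_onD) auto
    also have "\<dots> < L' * (e / (2 * L'))"
      using M1[OF x] m n \<open>L' > 0\<close> by (intro mult_strict_left_mono) auto
    also have "\<dots> = e / 2"
      using \<open>L' > 0\<close> by simp
    finally have "dist (g m (\<pi> x) (f m x)) (g m (\<pi> x) (f n x)) < e / 2" .
    moreover have "dist (g n (\<pi> x) (f n x)) (g m (\<pi> x) (f n x)) < e / 2"
      using M2 maps_to[OF x] m n by auto
    ultimately show ?thesis
      by (rule dist_triangle_half_l)
  qed
  then show "\<exists>M. \<forall>x\<in>S. \<forall>m\<ge>M. \<forall>n\<ge>M. dist (g m (\<pi> x) (f m x)) (g n (\<pi> x) (f n x)) < e"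
    by blast
qed

lemma uniformly_convergent_on_lipschitz_comp:
  fixes f :: "nat \<Rightarrow> 'a \<Rightarrow> 'b::metric_space" and g :: "nat \<Rightarrow> 'p \<Rightarrow> 'b \<Rightarrow> 'c::complete_space"
  assumes "uniformly_convergent_on S f"
    and "uniformly_convergent_on T (\<lambda>n (p, y). g n p y)"
    and "\<And>n x. x \<in> S \<Longrightarrow> (\<pi> x, f n x) \<in> T"
    and "\<And>n x. x \<in> S \<Longrightarrow> L-lipschitz_on UNIV (g n (\<pi> x))"
  shows "uniformly_convergent_on S (\<lambda>n x. g n (\<pi> x) (f n x))"
  using uniformly_Cauchy_on_lipschitz_comp[OF assms(1,2)[THEN uniformly_convergent_Cauchy] assms(3,4)]
  by (rule Cauchy_uniformly_convergent)

lemma uniformly_convergent_on_translates_comp: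
  fixes F :: "'a::plus \<Rightarrow> 'x \<Rightarrow> 'y::metric_space" and G :: "'a \<Rightarrow> 'y \<Rightarrow> 'z::complete_space"
  assumes shift: "\<forall>t\<in>I. \<forall>l. t + c l \<in> I"
    and F_conv: "uniformly_convergent_on (I \<times> B) (\<lambda>l (t, u). F (t + c l) u)"
    and "strict_mono k"
    and G_conv: "uniformly_convergent_on (I \<times> (\<Union>t\<in>I. F t ` B)) (\<lambda>l (t, y). G (t + c (k l)) y)"
    and lipschitz: "\<forall>t\<in>I. L-lipschitz_on UNIV (G t)"
  shows "uniformly_convergent_on (I \<times> B) (\<lambda>l (t, u). G (t + c (k l)) (F (t + c (k l)) u))"
proof -
  have "uniformly_convergent_on (I \<times> B) (\<lambda>l (t, u). F (t + c (k l)) u)"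
    using uniformly_convergent_on_compose[OF F_conv filterlim_subseq[OF \<open>strict_mono k\<close>]] by simp
  then have "uniformly_convergent_on (I \<times> B)
      (\<lambda>l x. G (fst x + c (k l)) ((\<lambda>(t, u). F (t + c (k l)) u) x))"
  proof (rule uniformly_convergent_on_lipschitz_comp[OF _ G_conv])
    fix l x
    assume x: "x \<in> I \<times> B"
    then have shifted: "fst x + c (k l) \<in> I"
      using shift by auto
    then show "(fst x, (\<lambda>(t, u). F (t + c (k l)) u) x) \<in> I \<times> (\<Union>t\<in>I. F t ` B)"
      using x by auto
    show "L-lipschitz_on UNIV (G (fst x + c (k l)))"
      using lipschitz shifted by blast
  qed
  then show ?thesis
    by (simp add: split_beta')
qed

theorem theorem2p45:
  fixes I :: "(real^'n) set"
    and R :: "(nat \<Rightarrow> real^'n) set"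
    and \<B> :: "'x::{complex_normed_vector, banach} set set"
    and F :: "real^'n \<Rightarrow> 'x \<Rightarrow> 'y::{complex_normed_vector, banach}"
    and G :: "real^'n \<Rightarrow> 'y \<Rightarrow> 'z::{complex_normed_vector, banach}"
    and L :: real
  assumes "I \<noteq> {}"
    and "\<B> \<noteq> {}"
    and "\<forall>B\<in>\<B>. B \<noteq> {}"
    and "\<forall>x. \<exists>B\<in>\<B>. x \<in> B"
    and "R \<noteq> {}"
    and "\<forall>t\<in>I. \<forall>b\<in>R. \<forall>l. t + b l \<in> I"
    and "multi_almost_periodic I R \<B> F"
    and "multi_almost_periodic I {b \<circ> k | b k. b \<in> R \<and> strict_mono k}
           {(\<Union>t\<in>I. F t ` B) | B. B \<in> \<B>} G"
    and "L > 0"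
    and "\<forall>t\<in>I. \<forall>x y. norm (G t x - G t y) \<le> L * norm (x - y)"
  shows "multi_almost_periodic I R \<B> (\<lambda>t x. G t (F t x))"
proof -
  note F_map = assms(7)[unfolded multi_almost_periodic_iff]
    and G_map = assms(8)[unfolded multi_almost_periodic_iff]
  have G_lipschitz: "\<forall>t\<in>I. L-lipschitz_on UNIV (G t)"
    using assms(9,10) by (auto intro: lipschitz_onI simp: dist_norm)
  have "\<exists>k. strict_mono k \<and>
      uniformly_convergent_on (I \<times> B) (\<lambda>l (t, u). G (t + b (k l)) (F (t + b (k l)) u))"
    if B: "B \<in> \<B>" and b: "b \<in> R" for B b
  proof -
    obtain k1 where k1: "strict_mono k1"
      and F_conv: "uniformly_convergent_on (I \<times> B) (\<lambda>l (t, u). F (t + (b \<circ> k1) l) u)"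
      using F_map[THEN conjunct2, rule_format, OF B b] by auto
    have subseq: "b \<circ> k1 \<in> {b \<circ> k | b k. b \<in> R \<and> strict_mono k}"
      using b k1 by blast
    have image: "(\<Union>t\<in>I. F t ` B) \<in> {(\<Union>t\<in>I. F t ` B) | B. B \<in> \<B>}"
      using B by blast
    obtain k2 where k2: "strict_mono k2" and G_conv:
      "uniformly_convergent_on (I \<times> (\<Union>t\<in>I. F t ` B)) (\<lambda>l (t, y). G (t + (b \<circ> k1) (k2 l)) y)"
      using G_map[THEN conjunct2, rule_format, OF image subseq] by blast
    have "\<forall>t\<in>I. \<forall>l. t + (b \<circ> k1) l \<in> I"
      using assms(6) b by simp
    then have "uniformly_convergent_on (I \<times> B)
        (\<lambda>l (t, u). G (t + b ((k1 \<circ> k2) l)) (F (t + b ((k1 \<circ> k2) l)) u))"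
      using uniformly_convergent_on_translates_comp[OF _ F_conv k2 G_conv G_lipschitz] by simp
    with strict_mono_o[OF k1 k2] show ?thesis
      by blast
  qed
  then show ?thesis
    using continuous_on_parametric_comp F_map G_map unfolding multi_almost_periodic_iff by blast
qed

end
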